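(* For every model class $\mathcal M\subseteq\mathcal M^+$, every $\gamma>0$ and every $\bar M\in\mathcal M^+$, $$\mathrm{dec}^{\mathrm o}_{\mathrm r,\gamma}(\mathcal M,\bar M)\le\mathrm{dec}^{\mathrm c}_{\mathrm r,\gamma^{-1/2}}(\mathcal M,\bar M).$$
   Context: Models are kernels $M:\Pi\to\Delta([0,1]\times\mathcal O)$ (rewards in $[0,1]$); $\mathcal M^+$ is the set of all models. $f^M(\pi)=\mathbb E_{(r,o)\sim M(\pi)}[r]$, $\pi_M\in\arg\max f^M$, $g^M(\pi)=f^M(\pi_M)-f^M(\pi)$; $D^2_H$ is squared Hellinger distance. Constrained regret DEC $\mathrm{dec}^{\mathrm c}_{\mathrm r,\varepsilon}(\mathcal M,\bar M)=\inf_{p\in\Delta(\Pi)}\sup_{M\in\mathcal M}\{\mathbb E_{\pi\sim p}[g^M(\pi)]:\mathbb E_{\pi\sim p}[D^2_H(M(\pi),\bar M(\pi))]\le\varepsilon^2\}$ (value $0$ if empty); offset regret DEC $\mathrm{dec}^{\mathrm o}_{\mathrm r,\gamma}(\mathcal M,\bar M)=\inf_{p\in\Delta(\Pi)}\sup_{M\in\mathcal M}\mathbb E_{\pi\sim p}[g^M(\pi)-\gamma D^2_H(M(\pi),\bar M(\pi))]$. *)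

theory Defs
  imports "HOL-Probability.Probability"
begin

definition is_model :: "'o measure \<Rightarrow> ('pi \<Rightarrow> (real \<times> 'o) measure) \<Rightarrow> bool" where
  "is_model Obs M \<longleftrightarrow> (\<forall>\<pi>. prob_space (M \<pi>) \<and> sets (M \<pi>) = sets (borel \<Otimes>\<^sub>M Obs)
       \<and> emeasure (M \<pi>) ({0..1} \<times> space Obs) = 1)"

definition models :: "'o measure \<Rightarrow> ('pi \<Rightarrow> (real \<times> 'o) measure) set" where
  "models Obs = {M. is_model Obs M}"

definition fM :: "('pi \<Rightarrow> (real \<times> 'o) measure) \<Rightarrow> 'pi \<Rightarrow> real" where
  "fM M \<pi> = (\<integral>z. fst z \<partial>(M \<pi>))"

text \<open>Regret g^M(pi) = f^M(pi_M) - f^M(pi), with f^M(pi_M) = max f^M = sup f^M.\<close>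
definition gM :: "('pi \<Rightarrow> (real \<times> 'o) measure) \<Rightarrow> 'pi \<Rightarrow> real" where
  "gM M \<pi> = (SUP \<pi>'. fM M \<pi>') - fM M \<pi>"

text \<open>Squared Hellinger distance, computed via densities w.r.t. the dominating measure P + Q.\<close>
definition sum_meas :: "'a measure \<Rightarrow> 'a measure \<Rightarrow> 'a measure" where
  "sum_meas P Q = measure_of (space P) (sets P) (\<lambda>A. emeasure P A + emeasure Q A)"

definition hellinger_sq :: "'a measure \<Rightarrow> 'a measure \<Rightarrow> real" where
  "hellinger_sq P Q =
     (let \<nu> = sum_meas P Q in
      \<integral>z. (sqrt (enn2real (RN_deriv \<nu> P z)) - sqrt (enn2real (RN_deriv \<nu> Q z)))\<^sup>2 \<partial>\<nu>)"

definition Eg :: "'pi pmf \<Rightarrow> ('pi \<Rightarrow> (real \<times> 'o) measure) \<Rightarrow> real" where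
  "Eg p M = measure_pmf.expectation p (\<lambda>\<pi>. gM M \<pi>)"

definition EH :: "'pi pmf \<Rightarrow> ('pi \<Rightarrow> (real \<times> 'o) measure) \<Rightarrow> ('pi \<Rightarrow> (real \<times> 'o) measure) \<Rightarrow> real" where
  "EH p M Mbar = measure_pmf.expectation p (\<lambda>\<pi>. hellinger_sq (M \<pi>) (Mbar \<pi>))"

text \<open>Constrained regret DEC (value 0 when the constraint set is empty).\<close>
definition dec_c :: "('pi \<Rightarrow> (real \<times> 'o) measure) set \<Rightarrow> ('pi \<Rightarrow> (real \<times> 'o) measure) \<Rightarrow> real \<Rightarrow> ereal" where
  "dec_c Ms Mbar \<epsilon> =
     (INF p. (let S = {M \<in> Ms. EH p M Mbar \<le> \<epsilon>\<^sup>2} in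
              if S = {} then 0 else (SUP M\<in>S. ereal (Eg p M))))"

definition dec_o :: "('pi \<Rightarrow> (real \<times> 'o) measure) set \<Rightarrow> ('pi \<Rightarrow> (real \<times> 'o) measure) \<Rightarrow> real \<Rightarrow> ereal" where
  "dec_o Ms Mbar \<gamma> = (INF p. (SUP M\<in>Ms. ereal (Eg p M - \<gamma> * EH p M Mbar)))"

end

theory Submission
  imports Defs
begin

text \<open>Fix a distribution \<open>p\<close> and a model \<open>M\<close>. If \<open>\<gamma> EH p M Mbar \<le> 1\<close>, then \<open>M\<close> satisfies the
  Hellinger constraint of radius \<open>\<gamma> powr (-1/2)\<close> and its offset objective is at most its expected
  regret. Otherwise the penalty exceeds \<open>1\<close>, an upper bound on any expected regret, so the offset
  objective is negative, while the constrained value is always nonnegative. Hence the offset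
  supremum is dominated by the constrained one for every \<open>p\<close>, and so are the infima.\<close>

lemma AE_reward_in_unit_interval:
  assumes "is_model Obs M"
  shows "AE z in M \<pi>. fst z \<in> {0..1}"
proof -
  interpret prob_space "M \<pi>" using assms unfolding is_model_def by blast
  have em: "emeasure (M \<pi>) ({0..1} \<times> space Obs) = 1" using assms unfolding is_model_def by blast
  then have "{0..1} \<times> space Obs \<in> sets (M \<pi>)"
    using emeasure_notin_sets by fastforce
  then have "AE z in M \<pi>. z \<in> {0..1} \<times> space Obs"
    using AE_in_set_eq_1 em by (simp add: emeasure_eq_measure)
  then show ?thesis by eventually_elim auto
qed

lemma fM_bounds:
  assumes "is_model Obs M"
  shows "0 \<le> fM M \<pi> \<and> fM M \<pi> \<le> 1"
proof -
  interpret prob_space "M \<pi>" using assms unfolding is_model_def by blast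
  have sets_eq: "sets (M \<pi>) = sets (borel \<Otimes>\<^sub>M Obs)" using assms unfolding is_model_def by blast
  have bounded: "AE z in M \<pi>. 0 \<le> fst z \<and> fst z \<le> (1::real)"
    using AE_reward_in_unit_interval[OF assms] by eventually_elim auto
  have "fst \<in> borel_measurable (M \<pi>)"
    unfolding measurable_cong_sets[OF sets_eq refl] by (rule measurable_fst)
  then have "integrable (M \<pi>) fst"
    by (intro integrable_const_bound[where B=1]) (use bounded in \<open>eventually_elim, auto\<close>)
  then show ?thesis
    unfolding fM_def using integral_le_const integral_nonneg_AE bounded by auto
qed

lemma gM_bounds:
  assumes "is_model Obs M"
  shows "0 \<le> gM M \<pi> \<and> gM M \<pi> \<le> 1"
proof -
  have f: "\<And>x. 0 \<le> fM M x \<and> fM M x \<le> 1" using fM_bounds[OF assms] by blast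
  then have "bdd_above (range (fM M))" by (auto intro!: bdd_aboveI[where M=1])
  then have "fM M \<pi> \<le> (SUP x. fM M x)" by (rule cSUP_upper[OF UNIV_I])
  moreover have "(SUP x. fM M x) \<le> 1" using f by (intro cSUP_least) auto
  ultimately show ?thesis unfolding gM_def using f[of \<pi>] by auto
qed

lemma Eg_bounds:
  assumes "is_model Obs M"
  shows "0 \<le> Eg p M \<and> Eg p M \<le> 1"
proof -
  have g: "\<And>x. 0 \<le> gM M x \<and> gM M x \<le> 1" using gM_bounds[OF assms] by blast
  then have "integrable (measure_pmf p) (gM M)"
    by (intro measure_pmf.integrable_const_bound[where B=1]) auto
  then have "measure_pmf.expectation p (gM M) \<le> 1"
    using g by (intro measure_pmf.integral_le_const) auto
  then show ?thesis unfolding Eg_def using g by (auto intro: integral_nonneg)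
qed

lemma EH_nonneg: "0 \<le> EH p M Mbar"
  unfolding EH_def hellinger_sq_def Let_def by simp

lemma SUP_offset_le_SUP_constrained:
  fixes g h :: "'a \<Rightarrow> real"
  assumes g: "\<And>x. x \<in> A \<Longrightarrow> 0 \<le> g x \<and> g x \<le> 1"
    and h: "\<And>x. x \<in> A \<Longrightarrow> 0 \<le> h x"
    and "\<gamma> > 0"
  defines "S \<equiv> {x \<in> A. h x \<le> 1 / \<gamma>}"
  shows "(SUP x\<in>A. ereal (g x - \<gamma> * h x)) \<le> (if S = {} then 0 else SUP x\<in>S. ereal (g x))"
    (is "_ \<le> ?c")
proof (rule SUP_least)
  have SUP_S_upper: "ereal (g x) \<le> ?c" if "x \<in> S" for x
    using that SUP_upper[of x S "\<lambda>x. ereal (g x)"] by auto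
  have c_nonneg: "0 \<le> ?c"
  proof (cases "S = {}")
    case False
    then obtain x where x: "x \<in> S" by auto
    then have "0 \<le> ereal (g x)" using g S_def by simp
    also have "\<dots> \<le> ?c" using SUP_S_upper[OF x] .
    finally show ?thesis .
  qed simp
  fix x assume x: "x \<in> A"
  show "ereal (g x - \<gamma> * h x) \<le> ?c"
  proof (cases "h x \<le> 1 / \<gamma>")
    case True
    then have "ereal (g x - \<gamma> * h x) \<le> ereal (g x)" using h[OF x] \<open>\<gamma> > 0\<close> by simp
    also have "\<dots> \<le> ?c" using True x S_def SUP_S_upper by auto
    finally show ?thesis .
  next
    case False
    then have "1 < \<gamma> * h x" using \<open>\<gamma> > 0\<close> by (simp add: field_simps)
    then have "ereal (g x - \<gamma> * h x) \<le> 0" using g[OF x] by (simp add: zero_ereal_def)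
    then show ?thesis using c_nonneg by (rule order_trans)
  qed
qed

lemma powr_minus_half_squared:
  fixes x :: real
  assumes "x > 0"
  shows "(x powr (-1/2))\<^sup>2 = 1 / x"
  using assms by (simp add: power2_eq_square powr_add[symmetric] powr_minus_divide)

theorem proposition4p3:
  fixes Obs :: "'o measure"
    and Ms :: "('pi \<Rightarrow> (real \<times> 'o) measure) set"
    and Mbar :: "'pi \<Rightarrow> (real \<times> 'o) measure"
    and \<gamma> :: real
  assumes "Ms \<subseteq> models Obs"
    and "\<gamma> > 0"
    and "Mbar \<in> models Obs"
  shows "dec_o Ms Mbar \<gamma> \<le> dec_c Ms Mbar (\<gamma> powr (-1/2))"
proof -
  have Eg_bounds_Ms: "\<And>M. M \<in> Ms \<Longrightarrow> 0 \<le> Eg p M \<and> Eg p M \<le> 1" for p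
    using assms(1) Eg_bounds unfolding models_def by blast
  have "(SUP M\<in>Ms. ereal (Eg p M - \<gamma> * EH p M Mbar))
      \<le> (let S = {M \<in> Ms. EH p M Mbar \<le> 1 / \<gamma>} in if S = {} then 0 else SUP M\<in>S. ereal (Eg p M))"
    for p
    unfolding Let_def
    by (rule SUP_offset_le_SUP_constrained) (use Eg_bounds_Ms EH_nonneg assms(2) in auto)
  then show ?thesis
    unfolding dec_o_def dec_c_def powr_minus_half_squared[OF assms(2)]
    by (intro INF_mono) blast
qed

end
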